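(* Let $n\ge 4$ and let $q$ be a prime power with $q>\frac{n(n-1)^2(n-2)^2}{4}$. Then there exist pairwise distinct $\alpha_1,\dots,\alpha_n\in\mathbb F_q$ such that for every $\mathbf i=(i_1,i_2,i_3),\mathbf j=(j_1,j_2,j_3)\in S_3(n)$ with $d_H(\mathbf i,\mathbf j)\ge2$ there is no pair $(a,b)\in\mathbb F_q^*\times\mathbb F_q$ with $a\alpha_{i_\ell}+b=\alpha_{j_\ell}$ for all $\ell=1,2,3$.
   Context: $S_3(n)=\{(i_1,i_2,i_3)\in\{1,\dots,n\}^3: i_1<i_2<i_3\}$, and $d_H(\mathbf i,\mathbf j)$ is the number of coordinates in which $\mathbf i$ and $\mathbf j$ differ. *)

theory Defs
  imports Main
begin

definition S3 :: "nat \<Rightarrow> (nat \<times> nat \<times> nat) set" where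
  "S3 n = {(i1, i2, i3). 1 \<le> i1 \<and> i1 < i2 \<and> i2 < i3 \<and> i3 \<le> n}"

definition dH :: "nat \<times> nat \<times> nat \<Rightarrow> nat \<times> nat \<times> nat \<Rightarrow> nat" where
  "dH i j = (case i of (i1, i2, i3) \<Rightarrow> case j of (j1, j2, j3) \<Rightarrow>
     (if i1 = j1 then 0 else 1) + (if i2 = j2 then 0 else 1) + (if i3 = j3 then 0 else 1))"

end

theory Submission
  imports Defs
begin

(* An affine map x |-> a x + b with a ~= 0 preserves the ratio (x3 - x1) / (x2 - x1) of a triple,
   so it suffices to choose distinct alpha_1, ..., alpha_n such that all triples i1 < i2 < i3 have
   different ratios.  Such values are
   chosen greedily: once alpha_(m+1) = x is added, the ratio of each new triple is a non-constant
   affine function of x, so each coincidence with an old value, an old ratio or the ratio of another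
   new triple excludes at most one x.  With c = (n-1)(n-2)/2 this excludes at most
   m + c * c(n-3) + c^2 < n c^2 < q values. *)

definition affine_ratio :: "(nat \<Rightarrow> 'a::field) \<Rightarrow> nat \<times> nat \<times> nat \<Rightarrow> 'a" where
  "affine_ratio \<alpha> = (\<lambda>(i1, i2, i3). (\<alpha> i3 - \<alpha> i1) / (\<alpha> i2 - \<alpha> i1))"

lemma affine_ratio_affine_image:
  fixes \<alpha> :: "nat \<Rightarrow> 'a::field"
  assumes "a \<noteq> 0" "\<alpha> j1 = a * \<alpha> i1 + b" "\<alpha> j2 = a * \<alpha> i2 + b" "\<alpha> j3 = a * \<alpha> i3 + b"
  shows "affine_ratio \<alpha> (j1, j2, j3) = affine_ratio \<alpha> (i1, i2, i3)"
proof -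
  have "affine_ratio \<alpha> (j1, j2, j3) = (a * (\<alpha> i3 - \<alpha> i1)) / (a * (\<alpha> i2 - \<alpha> i1))"
    using assms(2-4) by (simp add: affine_ratio_def algebra_simps)
  also have "\<dots> = affine_ratio \<alpha> (i1, i2, i3)"
    using assms(1) by (simp add: affine_ratio_def)
  finally show ?thesis .
qed

lemma no_affine_map_if_affine_ratio_inj:
  fixes \<alpha> :: "nat \<Rightarrow> 'a::field"
  assumes "inj_on (affine_ratio \<alpha>) A" "(i1, i2, i3) \<in> A" "(j1, j2, j3) \<in> A"
    and "(i1, i2, i3) \<noteq> (j1, j2, j3)"
  shows "\<not> (\<exists>a b. a \<noteq> 0 \<and> a * \<alpha> i1 + b = \<alpha> j1 \<and> a * \<alpha> i2 + b = \<alpha> j2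
                  \<and> a * \<alpha> i3 + b = \<alpha> j3)"
proof
  assume "\<exists>a b. a \<noteq> 0 \<and> a * \<alpha> i1 + b = \<alpha> j1 \<and> a * \<alpha> i2 + b = \<alpha> j2 \<and> a * \<alpha> i3 + b = \<alpha> j3"
  then obtain a b where "a \<noteq> 0" "\<alpha> j1 = a * \<alpha> i1 + b" "\<alpha> j2 = a * \<alpha> i2 + b" "\<alpha> j3 = a * \<alpha> i3 + b"
    by metis
  then have "affine_ratio \<alpha> (j1, j2, j3) = affine_ratio \<alpha> (i1, i2, i3)"
    by (rule affine_ratio_affine_image)
  with assms show False by (auto dest: inj_onD)
qed

lemma card_affine_agree_le_1:
  fixes u v u' v' :: "'a::field"
  assumes "(u, v) \<noteq> (u', v')"
  shows "card {x. u * x + v = u' * x + v'} \<le> 1"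
proof (cases "u = u'")
  case True
  with assms have "{x. u * x + v = u' * x + v'} = {}" by auto
  then show ?thesis by simp
next
  case False
  then have "{x. u * x + v = u' * x + v'} = {(v' - v) / (u - u')}"
    by (auto simp: field_simps)
  then show ?thesis by simp
qed

lemma card_UN_le_card:
  assumes "finite I" "\<And>i. i \<in> I \<Longrightarrow> card (A i) \<le> 1"
  shows "card (\<Union>i\<in>I. A i) \<le> card I"
  using card_UN_le[OF assms(1), of A] sum_bounded_above[of I "\<lambda>i. card (A i)" 1] assms(2)
  by simp

definition pairs :: "nat \<Rightarrow> (nat \<times> nat) set" where
  "pairs m = {(i1, i2). 1 \<le> i1 \<and> i1 < i2 \<and> i2 \<le> m}"

lemma finite_pairs: "finite (pairs m)"
  by (rule finite_subset[of _ "{1..m} \<times> {1..m}"]) (auto simp: pairs_def)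

lemma pairs_mono: "m \<le> m' \<Longrightarrow> pairs m \<subseteq> pairs m'"
  by (auto simp: pairs_def)

lemma pairs_Suc: "pairs (Suc m) = pairs m \<union> (\<lambda>i. (i, Suc m)) ` {1..m}"
  by (auto simp: pairs_def le_Suc_eq)

lemma card_pairs: "2 * card (pairs m) = m * (m - 1)"
proof (induction m)
  case 0
  have "pairs 0 = {}" by (auto simp: pairs_def)
  then show ?case by simp
next
  case (Suc m)
  have "card (pairs (Suc m)) = card (pairs m) + m"
    unfolding pairs_Suc
    by (subst card_Un_disjoint) (auto simp: finite_pairs card_image inj_on_def, auto simp: pairs_def)
  with Suc.IH show ?case by (cases m) (auto simp: algebra_simps)
qed

lemma S3_Suc: "S3 (Suc m) = S3 m \<union> (\<lambda>(i1, i2). (i1, i2, Suc m)) ` pairs m"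
  by (fastforce simp: S3_def pairs_def le_Suc_eq)

lemma S3_subset: "S3 m \<subseteq> (\<lambda>((i1, i2), i3). (i1, i2, i3)) ` (pairs m \<times> {3..m})"
proof
  fix t assume "t \<in> S3 m"
  then obtain i1 i2 i3 where "t = (i1, i2, i3)" "1 \<le> i1" "i1 < i2" "i2 < i3" "i3 \<le> m"
    unfolding S3_def by auto
  then show "t \<in> (\<lambda>((i1, i2), i3). (i1, i2, i3)) ` (pairs m \<times> {3..m})"
    by (auto simp: pairs_def image_iff intro!: bexI[of _ "((i1, i2), i3)"])
qed

lemma finite_S3: "finite (S3 m)"
  using S3_subset by (rule finite_subset) (simp add: finite_pairs)

lemma card_S3_le: "card (S3 m) \<le> card (pairs m) * (m - 2)"
proof -
  have "card (S3 m) \<le> card ((\<lambda>((i1, i2), i3). (i1, i2, i3)) ` (pairs m \<times> {3..m}))"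
    using S3_subset by (rule card_mono[rotated]) (simp add: finite_pairs)
  also have "\<dots> \<le> card (pairs m \<times> {3..m})"
    by (rule card_image_le) (simp add: finite_pairs)
  finally show ?thesis by (simp add: card_cartesian_product)
qed

(* the ratio of the triple (i1, i2, m + 1) as a function of the value x assigned to m + 1 *)
definition new_ratio :: "(nat \<Rightarrow> 'a::field) \<Rightarrow> nat \<times> nat \<Rightarrow> 'a \<Rightarrow> 'a" where
  "new_ratio \<alpha> = (\<lambda>(i1, i2) x. (x - \<alpha> i1) / (\<alpha> i2 - \<alpha> i1))"

lemma new_ratio_affine:
  "new_ratio \<alpha> (i1, i2) x = inverse (\<alpha> i2 - \<alpha> i1) * x + - \<alpha> i1 * inverse (\<alpha> i2 - \<alpha> i1)"
  by (simp add: new_ratio_def divide_inverse algebra_simps)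

lemma inj_on_pairs_diff_nonzero:
  fixes \<alpha> :: "nat \<Rightarrow> 'a::ab_group_add"
  assumes "inj_on \<alpha> {1..m}" "(i1, i2) \<in> pairs m"
  shows "\<alpha> i2 - \<alpha> i1 \<noteq> 0"
proof -
  have "i1 \<in> {1..m}" "i2 \<in> {1..m}" "i1 \<noteq> i2"
    using assms(2) by (auto simp: pairs_def)
  then have "\<alpha> i2 \<noteq> \<alpha> i1" using inj_onD[OF assms(1)] by metis
  then show ?thesis by simp
qed

lemma card_new_ratio_eq_le_1:
  assumes "inj_on \<alpha> {1..m}" "p \<in> pairs m"
  shows "card {x. new_ratio \<alpha> p x = r} \<le> 1"
proof -
  obtain i1 i2 where p: "p = (i1, i2)" by fastforce
  let ?u = "inverse (\<alpha> i2 - \<alpha> i1)"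
  have "?u \<noteq> 0"
    using inj_on_pairs_diff_nonzero[OF assms(1)] assms(2) p by simp
  then have "card {x. ?u * x + - \<alpha> i1 * ?u = 0 * x + r} \<le> 1"
    by (intro card_affine_agree_le_1) simp
  then show ?thesis by (simp add: p new_ratio_affine)
qed

lemma card_new_ratio_eq_new_ratio_le_1:
  assumes inj: "inj_on \<alpha> {1..m}" and "p \<in> pairs m" "q \<in> pairs m" "p \<noteq> q"
  shows "card {x. new_ratio \<alpha> p x = new_ratio \<alpha> q x} \<le> 1"
proof -
  obtain i1 i2 j1 j2 where p: "p = (i1, i2)" and q: "q = (j1, j2)" by fastforce
  have range: "i1 \<in> {1..m}" "i2 \<in> {1..m}" "j1 \<in> {1..m}" "j2 \<in> {1..m}"
    using assms(2,3) p q by (auto simp: pairs_def)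
  have "(inverse (\<alpha> i2 - \<alpha> i1), - \<alpha> i1 * inverse (\<alpha> i2 - \<alpha> i1))
     \<noteq> (inverse (\<alpha> j2 - \<alpha> j1), - \<alpha> j1 * inverse (\<alpha> j2 - \<alpha> j1))"
  proof
    assume "(inverse (\<alpha> i2 - \<alpha> i1), - \<alpha> i1 * inverse (\<alpha> i2 - \<alpha> i1))
          = (inverse (\<alpha> j2 - \<alpha> j1), - \<alpha> j1 * inverse (\<alpha> j2 - \<alpha> j1))"
    moreover have "inverse (\<alpha> i2 - \<alpha> i1) \<noteq> 0"
      using inj_on_pairs_diff_nonzero[OF inj] assms(2) p by simp
    ultimately have "\<alpha> i1 = \<alpha> j1" "\<alpha> i2 = \<alpha> j2" by auto
    then have "i1 = j1" "i2 = j2" using inj range by (auto dest: inj_onD)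
    with \<open>p \<noteq> q\<close> p q show False by simp
  qed
  then show ?thesis
    unfolding p q new_ratio_affine by (rule card_affine_agree_le_1)
qed

definition obstructions :: "(nat \<Rightarrow> 'a::field) \<Rightarrow> nat \<Rightarrow> 'a set" where
  "obstructions \<alpha> m = \<alpha> ` {1..m}
     \<union> (\<Union>(p, t) \<in> pairs m \<times> S3 m. {x. new_ratio \<alpha> p x = affine_ratio \<alpha> t})
     \<union> (\<Union>(p, q) \<in> {(p, q) \<in> pairs m \<times> pairs m. p \<noteq> q}. {x. new_ratio \<alpha> p x = new_ratio \<alpha> q x})"

lemma card_obstructions_le:
  assumes "inj_on \<alpha> {1..m}"
  shows "card (obstructions \<alpha> m) \<le> m + card (pairs m) * card (S3 m) + card (pairs m) ^ 2"
proof -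
  let ?D = "{(p, q) \<in> pairs m \<times> pairs m. p \<noteq> q}"
  have D_subset: "?D \<subseteq> pairs m \<times> pairs m" by auto
  then have finite_D: "finite ?D" by (rule finite_subset) (simp add: finite_pairs)
  have "card (\<alpha> ` {1..m}) \<le> m"
    using card_image_le[of "{1..m}" \<alpha>] by simp
  moreover have "card (\<Union>(p, t) \<in> pairs m \<times> S3 m. {x. new_ratio \<alpha> p x = affine_ratio \<alpha> t})
      \<le> card (pairs m \<times> S3 m)"
    by (rule card_UN_le_card)
      (auto simp: finite_pairs finite_S3 intro: card_new_ratio_eq_le_1[OF assms, unfolded One_nat_def])
  moreover have "card (\<Union>(p, q) \<in> ?D. {x. new_ratio \<alpha> p x = new_ratio \<alpha> q x}) \<le> card ?D"
    by (rule card_UN_le_card[OF finite_D])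
      (auto intro: card_new_ratio_eq_new_ratio_le_1[OF assms, unfolded One_nat_def])
  moreover have "card ?D \<le> card (pairs m) ^ 2"
    using card_mono[OF _ D_subset] by (simp add: finite_pairs card_cartesian_product power2_eq_square)
  ultimately show ?thesis
    unfolding obstructions_def card_cartesian_product
    by (meson add_mono card_Un_le le_trans)
qed

lemma affine_ratio_inj_fun_upd:
  fixes \<alpha> :: "nat \<Rightarrow> 'a::field"
  assumes inj: "inj_on \<alpha> {1..m}" and ratio_inj: "inj_on (affine_ratio \<alpha>) (S3 m)"
    and x: "x \<notin> obstructions \<alpha> m"
  shows "inj_on (\<alpha>(Suc m := x)) {1..Suc m}"
    and "inj_on (affine_ratio (\<alpha>(Suc m := x))) (S3 (Suc m))"
proof -
  let ?\<beta> = "\<alpha>(Suc m := x)"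
  have x_new: "x \<notin> \<alpha> ` {1..m}"
    using x by (simp add: obstructions_def)
  show "inj_on ?\<beta> {1..Suc m}"
    using inj x_new by (simp add: atLeastAtMostSuc_conv inj_on_fun_updI)
  have old: "affine_ratio ?\<beta> t = affine_ratio \<alpha> t" if "t \<in> S3 m" for t
    using that by (auto simp: S3_def affine_ratio_def)
  have new: "affine_ratio ?\<beta> (i1, i2, Suc m) = new_ratio \<alpha> (i1, i2) x" if "(i1, i2) \<in> pairs m" for i1 i2
    using that by (auto simp: pairs_def affine_ratio_def new_ratio_def)
  have old_new: "affine_ratio ?\<beta> t \<noteq> affine_ratio ?\<beta> (i1, i2, Suc m)"
    if "t \<in> S3 m" "(i1, i2) \<in> pairs m" for t i1 i2
  proof -
    have "new_ratio \<alpha> (i1, i2) x \<noteq> affine_ratio \<alpha> t"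
      using x that unfolding obstructions_def by blast
    then show ?thesis using that by (simp add: old new)
  qed
  have new_new: "affine_ratio ?\<beta> (i1, i2, Suc m) \<noteq> affine_ratio ?\<beta> (j1, j2, Suc m)"
    if "(i1, i2) \<in> pairs m" "(j1, j2) \<in> pairs m" "(i1, i2) \<noteq> (j1, j2)" for i1 i2 j1 j2
  proof -
    have "new_ratio \<alpha> (i1, i2) x \<noteq> new_ratio \<alpha> (j1, j2) x"
      using x that unfolding obstructions_def by blast
    then show ?thesis using that by (simp add: new)
  qed
  show "inj_on (affine_ratio ?\<beta>) (S3 (Suc m))"
  proof (rule inj_onI)
    fix t t'
    assume "t \<in> S3 (Suc m)" "t' \<in> S3 (Suc m)" and eq: "affine_ratio ?\<beta> t = affine_ratio ?\<beta> t'"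
    then consider "t \<in> S3 m" "t' \<in> S3 m"
      | i1 i2 where "(i1, i2) \<in> pairs m" "t = (i1, i2, Suc m)" "t' \<in> S3 m"
      | j1 j2 where "t \<in> S3 m" "(j1, j2) \<in> pairs m" "t' = (j1, j2, Suc m)"
      | i1 i2 j1 j2 where "(i1, i2) \<in> pairs m" "t = (i1, i2, Suc m)"
          "(j1, j2) \<in> pairs m" "t' = (j1, j2, Suc m)"
      by (auto simp: S3_Suc)
    then show "t = t'"
    proof cases
      case 1
      then show ?thesis using eq old ratio_inj by (simp add: inj_on_eq_iff)
    next
      case 2
      then show ?thesis using eq old_new by metis
    next
      case 3
      then show ?thesis using eq old_new by metis
    next
      case 4
      then show ?thesis using eq new_new by blast
    qed
  qed
qed

lemma obstructions_bound_lt: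
  fixes n m c :: nat
  assumes n: "n \<ge> 4" and m: "m < n" and c: "2 * c = (n - 1) * (n - 2)"
  shows "m + card (pairs m) * card (S3 m) + card (pairs m) ^ 2 < n * c * c"
proof -
  have "n - 1 - 1 = n - 2" by simp
  then have "2 * card (pairs (n - 1)) = 2 * c"
    using card_pairs[of "n - 1"] c by simp
  moreover have "card (pairs m) \<le> card (pairs (n - 1))"
    using m by (intro card_mono finite_pairs pairs_mono) simp
  ultimately have P: "card (pairs m) \<le> c" by simp
  have "card (S3 m) \<le> card (pairs m) * (m - 2)"
    by (rule card_S3_le)
  also have "\<dots> \<le> c * (n - 3)"
    using P m by (intro mult_le_mono) auto
  finally have S: "card (S3 m) \<le> c * (n - 3)" .
  have "(n - 1) * 2 \<le> (n - 1) * (n - 2)"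
    using n by (intro mult_le_mono2) simp
  then have "n - 1 \<le> c" using c by linarith
  then have "m \<le> c" using m by linarith
  moreover have "c \<ge> 1" using \<open>m \<le> c\<close> c n by (cases c) auto
  moreover have "c \<le> c * c" using \<open>c \<ge> 1\<close> by simp
  ultimately have m_lt: "m < 2 * (c * c)" by linarith
  have "m + card (pairs m) * card (S3 m) + card (pairs m) ^ 2 \<le> m + c * (c * (n - 3)) + c * c"
    using P S by (simp add: add_mono mult_le_mono power2_eq_square)
  also have "\<dots> < 2 * (c * c) + c * c * (n - 3) + c * c"
    using m_lt by simp
  also have "\<dots> = n * c * c"
    using n by (simp add: algebra_simps)
  finally show ?thesis .
qed

lemma exists_affine_ratio_inj:
  assumes n: "n \<ge> 4" and c: "2 * c = (n - 1) * (n - 2)"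
    and q: "n * c * c < card (UNIV :: 'a::{field, finite} set)"
  shows "m \<le> n \<Longrightarrow> \<exists>\<alpha> :: nat \<Rightarrow> 'a. inj_on \<alpha> {1..m} \<and> inj_on (affine_ratio \<alpha>) (S3 m)"
proof (induction m)
  case 0
  have "S3 0 = {}" by (auto simp: S3_def)
  then show ?case by simp
next
  case (Suc m)
  then obtain \<alpha> :: "nat \<Rightarrow> 'a" where inj: "inj_on \<alpha> {1..m}"
    and ratio_inj: "inj_on (affine_ratio \<alpha>) (S3 m)"
    by auto
  have "card (obstructions \<alpha> m) < card (UNIV :: 'a set)"
    using card_obstructions_le[OF inj] obstructions_bound_lt[OF n _ c, of m] Suc.prems q
    by linarith
  then have "obstructions \<alpha> m \<noteq> UNIV" by auto
  then obtain x where "x \<notin> obstructions \<alpha> m" by blast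
  then show ?case
    using affine_ratio_inj_fun_upd[OF inj ratio_inj] by blast
qed

theorem lemma4p7:
  fixes n :: nat
  assumes "n \<ge> 4"
    and "4 * card (UNIV :: 'a::{field, finite} set) > n * (n - 1)^2 * (n - 2)^2"
  shows "\<exists>\<alpha> :: nat \<Rightarrow> 'a. inj_on \<alpha> {1..n} \<and>
    (\<forall>i1 i2 i3 j1 j2 j3. (i1, i2, i3) \<in> S3 n \<longrightarrow> (j1, j2, j3) \<in> S3 n \<longrightarrow>
       dH (i1, i2, i3) (j1, j2, j3) \<ge> 2 \<longrightarrow>
       \<not> (\<exists>a b. a \<noteq> 0 \<and> a * \<alpha> i1 + b = \<alpha> j1 \<and> a * \<alpha> i2 + b = \<alpha> j2
                  \<and> a * \<alpha> i3 + b = \<alpha> j3))"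
proof -
  define c where "c = (n - 1) * (n - 2) div 2"
  have c: "2 * c = (n - 1) * (n - 2)"
    unfolding c_def by simp
  have "n * (n - 1)^2 * (n - 2)^2 = n * (2 * c)^2"
    by (simp add: c power_mult_distrib [symmetric])
  also have "\<dots> = 4 * (n * c * c)"
    by (simp add: power2_eq_square)
  finally have "n * c * c < card (UNIV :: 'a set)"
    using assms(2) by linarith
  then obtain \<alpha> :: "nat \<Rightarrow> 'a" where inj: "inj_on \<alpha> {1..n}"
    and ratio_inj: "inj_on (affine_ratio \<alpha>) (S3 n)"
    using exists_affine_ratio_inj[OF assms(1) c] by blast
  show ?thesis
  proof (intro exI conjI allI impI)
    fix i1 i2 i3 j1 j2 j3
    assume "(i1, i2, i3) \<in> S3 n" "(j1, j2, j3) \<in> S3 n" "dH (i1, i2, i3) (j1, j2, j3) \<ge> 2"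
    then show "\<not> (\<exists>a b. a \<noteq> 0 \<and> a * \<alpha> i1 + b = \<alpha> j1 \<and> a * \<alpha> i2 + b = \<alpha> j2
                  \<and> a * \<alpha> i3 + b = \<alpha> j3)"
      by (intro no_affine_map_if_affine_ratio_inj[OF ratio_inj]) (auto simp: dH_def)
  qed (rule inj)
qed

end
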